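(* Let $A\in\mathbb{R}^{n\times n}$ be monotone, let $A=P_1-R_1+S_1$ be a double weak regular splitting and $A=P_2-R_2+S_2$ a double regular splitting of $A$. Suppose $1\notin\sigma(S_2P_1^{-1})$, $\widehat{A}^{-1}\geq 0$ where $\widehat{A}=(I-S_2P_1^{-1})A$, $P_1^{-1}R_1\geq P_2^{-1}R_2$ and $P_2^{-1}S_2\geq P_1^{-1}S_1$. Then $\rho(W_{12})\leq\min\{\rho(T_1),\rho(T_2)\}<1$, where $$W_{12}=\begin{pmatrix} P_2^{-1}R_2-P_2^{-1}S_2P_1^{-1}R_1 & P_2^{-1}S_2P_1^{-1}S_1\\ I & 0\end{pmatrix},\qquad T_i=\begin{pmatrix} P_i^{-1}R_i & -P_i^{-1}S_i\\ I&0\end{pmatrix}\ (i=1,2).$$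
   Context: Inequalities are entrywise; $\rho$ is the spectral radius, $\sigma$ the spectrum. $A$ is monotone if $A$ is nonsingular and $A^{-1}\geq 0$. A double splitting $A=P-R+S$ with $P$ nonsingular is a double regular splitting if $P^{-1}\geq0$, $R\geq0$, $S\leq0$, and a double weak regular splitting if $P^{-1}\geq 0$, $P^{-1}R\geq0$, $P^{-1}S\leq0$. *)

theory Defs
  imports "Jordan_Normal_Form.Spectral_Radius"
begin

definition mat_inv :: "'a :: field mat \<Rightarrow> 'a mat" where
  "mat_inv A = (SOME B. inverts_mat A B \<and> inverts_mat B A)"

definition mat_le :: "real mat \<Rightarrow> real mat \<Rightarrow> bool" where
  "mat_le A B \<longleftrightarrow> dim_row A = dim_row B \<and> dim_col A = dim_col B \<and>
     (\<forall>i < dim_row A. \<forall>j < dim_col A. A $$ (i,j) \<le> B $$ (i,j))"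

definition nonneg_mat :: "real mat \<Rightarrow> bool" where
  "nonneg_mat A \<longleftrightarrow> mat_le (0\<^sub>m (dim_row A) (dim_col A)) A"

definition nonpos_mat :: "real mat \<Rightarrow> bool" where
  "nonpos_mat A \<longleftrightarrow> mat_le A (0\<^sub>m (dim_row A) (dim_col A))"

definition monotone_mat :: "real mat \<Rightarrow> bool" where
  "monotone_mat A \<longleftrightarrow> invertible_mat A \<and> nonneg_mat (mat_inv A)"

definition rho :: "real mat \<Rightarrow> real" where
  "rho A = spectral_radius (map_mat complex_of_real A)"

definition double_splitting :: "nat \<Rightarrow> real mat \<Rightarrow> real mat \<Rightarrow> real mat \<Rightarrow> real mat \<Rightarrow> bool" where
  "double_splitting n A P R S \<longleftrightarrow>
     A \<in> carrier_mat n n \<and> P \<in> carrier_mat n n \<and> R \<in> carrier_mat n n \<and> S \<in> carrier_mat n n \<and>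
     A = P - R + S \<and> invertible_mat P"

definition double_regular_splitting :: "nat \<Rightarrow> real mat \<Rightarrow> real mat \<Rightarrow> real mat \<Rightarrow> real mat \<Rightarrow> bool" where
  "double_regular_splitting n A P R S \<longleftrightarrow>
     double_splitting n A P R S \<and> nonneg_mat (mat_inv P) \<and> nonneg_mat R \<and> nonpos_mat S"

definition double_weak_regular_splitting :: "nat \<Rightarrow> real mat \<Rightarrow> real mat \<Rightarrow> real mat \<Rightarrow> real mat \<Rightarrow> bool" where
  "double_weak_regular_splitting n A P R S \<longleftrightarrow>
     double_splitting n A P R S \<and> nonneg_mat (mat_inv P) \<and>
     nonneg_mat (mat_inv P * R) \<and> nonpos_mat (mat_inv P * S)"

end

theory Submission
  imports Defs
begin

text \<open>
  Write H_i = P_i^-1 R_i and K_i = P_i^-1 S_i. All iteration matrices are nonnegative block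
  companion matrices C(X, Y) = [X, Y; I, 0], namely T_i = C(H_i, -K_i) and
  W_12 = C(H_2 - K_2 H_1, K_2 K_1). For u = (lam y, y) one has
  lam u - C(X, Y) u = ((lam^2 I - lam X - Y) y, 0), so a positive y on which the quadratic pencil
  lam^2 I - lam X - Y is nonnegative gives rho(C(X, Y)) <= lam by the Collatz-Wielandt bound.
  Taking y = A^-1 e, with e the all-ones vector, and lam close to 1 yields rho(T_i) < 1.
  For rho(T_2) < lam < 1 the nonnegative resolvent of T_2 supplies y > 0 with
  (lam^2 P_2 - lam R_2 + S_2) y = e. Then A y >= 0, hence g = (I - lam H_1 + K_1) y >= 0, and
  since the pencil of W_12 is the pencil of T_2 minus K_2 (I - lam H_1 + K_1), its value on y
  is P_2^-1 e - K_2 g >= 0. So rho(W_12) <= rho(T_2), and rho(T_2) <= rho(T_1) because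
  0 <= T_2 <= T_1.
\<close>

lemma
  fixes P :: "'a :: field mat"
  assumes "invertible_mat P" and "P \<in> carrier_mat n n"
  shows mat_inv_carrier: "mat_inv P \<in> carrier_mat n n"
    and mat_inv_right: "P * mat_inv P = 1\<^sub>m n"
    and mat_inv_left: "mat_inv P * P = 1\<^sub>m n"
proof -
  have "\<exists>B. inverts_mat P B \<and> inverts_mat B P"
    using assms(1) unfolding invertible_mat_def by auto
  then have "inverts_mat P (mat_inv P) \<and> inverts_mat (mat_inv P) P"
    unfolding mat_inv_def by (rule someI_ex)
  then have right: "P * mat_inv P = 1\<^sub>m n" and left: "mat_inv P * P = 1\<^sub>m (dim_row (mat_inv P))"
    using assms(2) unfolding inverts_mat_def by auto
  have "dim_col (mat_inv P) = n"
    using arg_cong[OF right, of dim_col] by simp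
  moreover have "dim_row (mat_inv P) = n"
    using arg_cong[OF left, of dim_col] assms(2) by simp
  ultimately show "mat_inv P \<in> carrier_mat n n" by auto
  show "P * mat_inv P = 1\<^sub>m n" by (fact right)
  show "mat_inv P * P = 1\<^sub>m n" using left \<open>dim_row (mat_inv P) = n\<close> by simp
qed

lemma mult_nonneg_nonneg_mat:
  "nonneg_mat A \<Longrightarrow> nonneg_mat B \<Longrightarrow> A \<in> carrier_mat r k \<Longrightarrow> B \<in> carrier_mat k c \<Longrightarrow>
    nonneg_mat (A * B)"
  by (auto simp: nonneg_mat_def mat_le_def scalar_prod_def intro!: sum_nonneg)

lemma mult_nonneg_nonpos_mat:
  "nonneg_mat A \<Longrightarrow> nonpos_mat B \<Longrightarrow> A \<in> carrier_mat r k \<Longrightarrow> B \<in> carrier_mat k c \<Longrightarrow>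
    nonpos_mat (A * B)"
  by (auto simp: nonneg_mat_def nonpos_mat_def mat_le_def scalar_prod_def
      intro!: sum_nonpos mult_nonneg_nonpos)

lemma mult_nonpos_nonneg_mat:
  "nonpos_mat A \<Longrightarrow> nonneg_mat B \<Longrightarrow> A \<in> carrier_mat r k \<Longrightarrow> B \<in> carrier_mat k c \<Longrightarrow>
    nonpos_mat (A * B)"
  by (auto simp: nonneg_mat_def nonpos_mat_def mat_le_def scalar_prod_def
      intro!: sum_nonpos mult_nonpos_nonneg)

lemma mult_nonpos_nonpos_mat:
  "nonpos_mat A \<Longrightarrow> nonpos_mat B \<Longrightarrow> A \<in> carrier_mat r k \<Longrightarrow> B \<in> carrier_mat k c \<Longrightarrow>
    nonneg_mat (A * B)"
  by (auto simp: nonneg_mat_def nonpos_mat_def mat_le_def scalar_prod_def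
      intro!: sum_nonneg mult_nonpos_nonpos)

lemma nonneg_mat_uminus: "nonpos_mat M \<Longrightarrow> nonneg_mat (- M)"
  by (auto simp: nonneg_mat_def nonpos_mat_def mat_le_def)

lemma nonneg_mat_diff:
  "nonneg_mat M \<Longrightarrow> nonpos_mat N \<Longrightarrow> M \<in> carrier_mat r c \<Longrightarrow> N \<in> carrier_mat r c \<Longrightarrow>
    nonneg_mat (M - N)"
  unfolding nonneg_mat_def nonpos_mat_def mat_le_def by simp (meson order.trans)

lemma mat_le_uminus: "mat_le A B \<Longrightarrow> mat_le (- B) (- A)"
  by (auto simp: mat_le_def)

lemma less_eq_vecI:
  "v \<in> carrier_vec n \<Longrightarrow> w \<in> carrier_vec n \<Longrightarrow> (\<And>i. i < n \<Longrightarrow> v $ i \<le> w $ i) \<Longrightarrow> v \<le> w"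
  by (auto simp: less_eq_vec_def)

lemma less_eq_vecD: "v \<le> w \<Longrightarrow> i < dim_vec w \<Longrightarrow> v $ i \<le> w $ i"
  by (auto simp: less_eq_vec_def)

lemma mat_le_mult_vec_mono:
  assumes "mat_le M N" and "N \<in> carrier_mat r c" and "0\<^sub>v c \<le> w"
  shows "M *\<^sub>v w \<le> N *\<^sub>v w"
  using assms
  by (auto simp: mat_le_def less_eq_vec_def scalar_prod_def intro!: sum_mono mult_right_mono)

lemma nonneg_mat_mult_vec_mono:
  assumes "nonneg_mat M" and "M \<in> carrier_mat r c" and "v \<le> w" and "w \<in> carrier_vec c"
  shows "M *\<^sub>v v \<le> M *\<^sub>v w"
  using assms
  by (auto simp: nonneg_mat_def mat_le_def less_eq_vec_def scalar_prod_def
      intro!: sum_mono mult_left_mono)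

lemma nonneg_mat_mult_vec:
  assumes "nonneg_mat M" and "M \<in> carrier_mat r c" and "0\<^sub>v c \<le> w"
  shows "0\<^sub>v r \<le> M *\<^sub>v w"
  using assms
  by (auto simp: nonneg_mat_def mat_le_def less_eq_vec_def scalar_prod_def intro!: sum_nonneg)

lemma nonpos_mat_mult_vec:
  assumes "nonpos_mat M" and "M \<in> carrier_mat r c" and "0\<^sub>v c \<le> w"
  shows "M *\<^sub>v w \<le> 0\<^sub>v r"
  using assms
  by (auto simp: nonpos_mat_def mat_le_def less_eq_vec_def scalar_prod_def
      intro!: sum_nonpos mult_nonpos_nonneg)

lemma mat_inv_mult_ones_pos:
  assumes "invertible_mat P" and "P \<in> carrier_mat n n" and "nonneg_mat (mat_inv P)" and "i < n"
  shows "0 < (mat_inv P *\<^sub>v vec n (\<lambda>_. 1)) $ i"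
proof (rule ccontr)
  let ?Q = "mat_inv P"
  have Q: "?Q \<in> carrier_mat n n" by (rule mat_inv_carrier[OF assms(1,2)])
  have nonneg: "0 \<le> ?Q $$ (i, j)" if "j < n" for j
    using assms(3,4) Q that by (auto simp: nonneg_mat_def mat_le_def)
  assume "\<not> 0 < (?Q *\<^sub>v vec n (\<lambda>_. 1)) $ i"
  then have "(\<Sum>j<n. ?Q $$ (i, j)) \<le> 0"
    using Q assms(4) by (simp add: scalar_prod_def lessThan_atLeast0)
  then have "(\<Sum>j<n. ?Q $$ (i, j)) = 0"
    using nonneg by (meson antisym lessThan_iff sum_nonneg)
  then have "?Q $$ (i, j) = 0" if "j < n" for j
    using nonneg that by (subst (asm) sum_nonneg_eq_0_iff) auto
  then have "(?Q * P) $$ (i, i) = 0"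
    using Q assms(2,4) by (simp add: scalar_prod_def)
  then show False
    using mat_inv_left[OF assms(1,2)] assms(4) by simp
qed

lemma rho_nonneg:
  assumes "B \<in> carrier_mat m m" and "0 < m"
  shows "0 \<le> rho B"
  using spectral_radius_mem_max(1)[of "map_mat complex_of_real B" m] assms
  unfolding rho_def by auto

lemma norm_eigenvalue_le_rho:
  assumes "B \<in> carrier_mat m m" and "eigenvector (map_mat complex_of_real B) v c"
  shows "norm c \<le> rho B"
proof -
  have C: "map_mat complex_of_real B \<in> carrier_mat m m"
    using assms(1) by simp
  have "c \<in> spectrum (map_mat complex_of_real B)"
    using assms(2) unfolding spectrum_def eigenvalue_def by auto
  moreover have "0 < m"
    using assms(2) C unfolding eigenvector_def by (cases m) auto
  ultimately show ?thesis
    using spectral_radius_mem_max(2)[OF C] unfolding rho_def by auto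
qed

lemma abs_eigenvalue_le_rho:
  fixes B :: "real mat"
  assumes "B \<in> carrier_mat m m" and "eigenvector B v c"
  shows "\<bar>c\<bar> \<le> rho B"
  using norm_eigenvalue_le_rho[OF assms(1) of_real_hom.eigenvector_hom[OF assms]] by simp

lemma max_ratio_index:
  fixes f x :: "nat \<Rightarrow> real"
  assumes "0 < m" and "\<forall>j<m. 0 < x j"
  obtains i t where "i < m" and "f i = t * x i" and "\<And>j. j < m \<Longrightarrow> f j \<le> t * x j"
proof -
  define t where "t = Max ((\<lambda>j. f j / x j) ` {..<m})"
  have "f j \<le> t * x j" if "j < m" for j
  proof -
    have "f j / x j \<le> t"
      unfolding t_def using that by (intro Max_ge) auto
    then show ?thesis
      using assms(2) that by (simp add: pos_divide_le_eq mult.commute)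
  qed
  moreover have "t \<in> (\<lambda>j. f j / x j) ` {..<m}"
    unfolding t_def using \<open>0 < m\<close> by (intro Max_in) auto
  then obtain i where "i < m" and "f i = t * x i"
    using assms(2) by fastforce
  ultimately show thesis
    using that by blast
qed

lemma rho_le_subinvariant:
  assumes B: "B \<in> carrier_mat m m" "nonneg_mat B" and "0 < m"
    and x: "x \<in> carrier_vec m" "\<forall>i<m. 0 < x $ i" and sub: "B *\<^sub>v x \<le> lam \<cdot>\<^sub>v x"
  shows "rho B \<le> lam"
proof -
  let ?C = "map_mat complex_of_real B"
  have C: "?C \<in> carrier_mat m m" using B by simp
  obtain \<mu> where "\<mu> \<in> spectrum ?C" and rho: "rho B = norm \<mu>"
    using spectral_radius_mem_max(1)[OF C \<open>0 < m\<close>] unfolding rho_def by auto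
  then obtain v where v: "v \<in> carrier_vec m" "v \<noteq> 0\<^sub>v m" "?C *\<^sub>v v = \<mu> \<cdot>\<^sub>v v"
    using C unfolding spectrum_def eigenvalue_def eigenvector_def by auto
  \<comment> \<open>compare row i of the eigen-equation, where the bound |v| \<le> t x is attained\<close>
  obtain i t where i: "i < m" and ti: "norm (v $ i) = t * x $ i"
    and t: "\<And>j. j < m \<Longrightarrow> norm (v $ j) \<le> t * x $ j"
    using max_ratio_index[OF \<open>0 < m\<close> x(2), of "\<lambda>j. norm (v $ j)"] by blast
  have "0 < t"
  proof -
    obtain k where "k < m" "v $ k \<noteq> 0"
      using v(1,2) by (metis carrier_vecD eq_vecI index_zero_vec)
    then show ?thesis
      using t[of k] x(2) by (smt (verit) zero_less_mult_iff zero_less_norm_iff)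
  qed
  have Bi: "0 \<le> B $$ (i, j)" if "j < m" for j
    using B i that by (auto simp: nonneg_mat_def mat_le_def)
  have "norm \<mu> * norm (v $ i) = norm ((?C *\<^sub>v v) $ i)"
    using v i by (simp add: norm_mult)
  also have "\<dots> = norm (\<Sum>j<m. complex_of_real (B $$ (i, j)) * v $ j)"
    using v(1) i B by (simp add: scalar_prod_def lessThan_atLeast0)
  also have "\<dots> \<le> (\<Sum>j<m. B $$ (i, j) * (t * x $ j))"
    by (rule order_trans[OF norm_sum sum_mono]) (simp add: norm_mult Bi mult_left_mono t)
  also have "\<dots> = t * (B *\<^sub>v x) $ i"
    using B x i by (simp add: scalar_prod_def sum_distrib_left lessThan_atLeast0 algebra_simps)
  also have "\<dots> \<le> t * (lam * x $ i)"
    using less_eq_vecD[OF sub, of i] i x \<open>0 < t\<close> by (simp del: index_mult_mat_vec)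
  also have "\<dots> = lam * norm (v $ i)"
    by (simp add: ti)
  finally show ?thesis
    using \<open>0 < t\<close> x(2) i rho ti by (simp add: mult_le_cancel_right)
qed

lemma nonneg_mat_pow:
  assumes "nonneg_mat B" and "B \<in> carrier_mat m m"
  shows "nonneg_mat (B ^\<^sub>m k)"
proof (induction k)
  case 0
  then show ?case by (auto simp: nonneg_mat_def mat_le_def)
next
  case (Suc k)
  then show ?case
    using mult_nonneg_nonneg_mat[OF Suc assms(1) pow_carrier_mat[OF assms(2)] assms(2)] by simp
qed

lemma smult_pow_mat:
  fixes A :: "'a :: comm_ring_1 mat"
  assumes "A \<in> carrier_mat n n"
  shows "(c \<cdot>\<^sub>m A) ^\<^sub>m k = c ^ k \<cdot>\<^sub>m A ^\<^sub>m k"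
proof (induction k)
  case 0
  show ?case using assms by auto
next
  case (Suc k)
  have "(c \<cdot>\<^sub>m A) ^\<^sub>m Suc k = (c ^ k \<cdot>\<^sub>m A ^\<^sub>m k) * (c \<cdot>\<^sub>m A)"
    using Suc by simp
  also have "\<dots> = c ^ Suc k \<cdot>\<^sub>m A ^\<^sub>m Suc k"
    using assms mult_smult_assoc_mat[OF pow_carrier_mat[OF assms] smult_carrier_mat[OF assms]]
      mult_smult_distrib[OF pow_carrier_mat[OF assms] assms]
    by (auto simp: ac_simps)
  finally show ?case .
qed

lemma smult_mat_mult_vec:
  "A \<in> carrier_mat nr nc \<Longrightarrow> v \<in> carrier_vec nc \<Longrightarrow> (k \<cdot>\<^sub>m A) *\<^sub>v v = k \<cdot>\<^sub>v (A *\<^sub>v v)"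
  by (auto simp: scalar_prod_def sum_distrib_left ac_simps)

lemma spectral_radius_scaled_lt_1:
  fixes B :: "real mat"
  assumes B: "B \<in> carrier_mat m m" and "0 < m" and "rho B < mu"
  shows "spectral_radius (complex_of_real (1 / mu) \<cdot>\<^sub>m map_mat complex_of_real B) < 1"
proof -
  let ?C = "map_mat complex_of_real B"
  define D where "D = complex_of_real (1 / mu) \<cdot>\<^sub>m ?C"
  have mu: "0 < mu"
    using rho_nonneg[OF B \<open>0 < m\<close>] \<open>rho B < mu\<close> by linarith
  have D: "D \<in> carrier_mat m m"
    using B by (simp add: D_def)
  obtain \<nu> where "\<nu> \<in> spectrum D" and rad: "spectral_radius D = norm \<nu>"
    using spectral_radius_mem_max(1)[OF D \<open>0 < m\<close>] by auto
  then obtain v where ev: "eigenvector D v \<nu>"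
    unfolding spectrum_def eigenvalue_def by auto
  have "?C = complex_of_real mu \<cdot>\<^sub>m D"
    using mu by (auto simp: D_def)
  then have "eigenvector ?C v (complex_of_real mu * \<nu>)"
    using ev D by (auto simp: eigenvector_def smult_mat_mult_vec smult_smult_assoc)
  then have "mu * norm \<nu> \<le> rho B"
    using norm_eigenvalue_le_rho[OF B] mu by (fastforce simp: norm_mult)
  then have "spectral_radius D < 1"
    using rad mu \<open>rho B < mu\<close> by (smt (verit) mult_le_cancel_left1)
  then show ?thesis
    unfolding D_def .
qed

lemma mat_pow_entry_bound:
  fixes B :: "real mat"
  assumes B: "B \<in> carrier_mat m m" and "0 < m" and "rho B < mu"
  obtains c where "\<And>k i j. i < m \<Longrightarrow> j < m \<Longrightarrow> \<bar>(B ^\<^sub>m k) $$ (i, j)\<bar> \<le> c * mu ^ k"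
proof -
  let ?C = "map_mat complex_of_real B"
  define D where "D = complex_of_real (1 / mu) \<cdot>\<^sub>m ?C"
  have mu: "0 < mu"
    using rho_nonneg[OF B \<open>0 < m\<close>] \<open>rho B < mu\<close> by linarith
  have C: "?C \<in> carrier_mat m m" and D: "D \<in> carrier_mat m m"
    using B by (simp_all add: D_def)
  obtain c where c: "\<And>k. norm_bound (D ^\<^sub>m k) c"
    using spectral_radius_jnf_norm_bound_less_1_upper_triangular[OF D]
      spectral_radius_scaled_lt_1[OF assms, folded D_def] by auto
  have "\<bar>(B ^\<^sub>m k) $$ (i, j)\<bar> \<le> c * mu ^ k" if "i < m" "j < m" for k i j
  proof -
    have "D ^\<^sub>m k = complex_of_real ((1 / mu) ^ k) \<cdot>\<^sub>m map_mat complex_of_real (B ^\<^sub>m k)"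
      unfolding D_def smult_pow_mat[OF C] of_real_hom.mat_hom_pow[OF B] by simp
    then have "(D ^\<^sub>m k) $$ (i, j) = complex_of_real ((B ^\<^sub>m k) $$ (i, j) / mu ^ k)"
      using that B by (simp add: power_divide)
    moreover have "norm ((D ^\<^sub>m k) $$ (i, j)) \<le> c"
      using c[of k] that D unfolding norm_bound_def by auto
    ultimately have "\<bar>(B ^\<^sub>m k) $$ (i, j)\<bar> / mu ^ k \<le> c"
      using mu by (simp add: norm_divide norm_power)
    then show ?thesis
      using mu by (simp add: divide_le_eq)
  qed
  then show thesis by (rule that)
qed

lemma supinvariant_pow:
  assumes B: "B \<in> carrier_mat m m" "nonneg_mat B" and "0 \<le> lam"
    and w: "w \<in> carrier_vec m" and sup: "lam \<cdot>\<^sub>v w \<le> B *\<^sub>v w"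
  shows "lam ^ k \<cdot>\<^sub>v w \<le> B ^\<^sub>m k *\<^sub>v w"
proof (induction k)
  case 0
  show ?case using w B by simp
next
  case (Suc k)
  have Bk: "B ^\<^sub>m k \<in> carrier_mat m m"
    using B by simp
  have "lam ^ Suc k \<cdot>\<^sub>v w = lam \<cdot>\<^sub>v (lam ^ k \<cdot>\<^sub>v w)"
    by (simp add: smult_smult_assoc)
  also have "\<dots> \<le> lam \<cdot>\<^sub>v (B ^\<^sub>m k *\<^sub>v w)"
    using Suc \<open>0 \<le> lam\<close> by (auto simp: less_eq_vec_def mult_left_mono simp del: index_mult_mat_vec)
  also have "\<dots> = B ^\<^sub>m k *\<^sub>v (lam \<cdot>\<^sub>v w)"
    by (simp add: mult_mat_vec[OF Bk w])
  also have "\<dots> \<le> B ^\<^sub>m k *\<^sub>v (B *\<^sub>v w)"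
    using nonneg_mat_mult_vec_mono[OF nonneg_mat_pow[OF B(2,1)] Bk sup] B w by simp
  also have "\<dots> = B ^\<^sub>m Suc k *\<^sub>v w"
    using assoc_mult_mat_vec[OF Bk B(1) w] by simp
  finally show ?case .
qed

lemma supinvariant_vec_eq_0:
  assumes B: "B \<in> carrier_mat m m" "nonneg_mat B" and "0 < m" and "rho B < lam"
    and w: "0\<^sub>v m \<le> w" and sup: "lam \<cdot>\<^sub>v w \<le> B *\<^sub>v w"
  shows "w = 0\<^sub>v m"
proof -
  have w_carrier: "w \<in> carrier_vec m"
    using w by (auto simp: less_eq_vec_def)
  have w_nonneg: "0 \<le> w $ j" if "j < m" for j
    using w that by (auto simp: less_eq_vec_def)
  define mu where "mu = (rho B + lam) / 2"
  have mu: "rho B < mu" "0 < mu" "mu < lam"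
    using rho_nonneg[OF B(1) \<open>0 < m\<close>] \<open>rho B < lam\<close> by (auto simp: mu_def)
  obtain c where c: "\<And>k i j. i < m \<Longrightarrow> j < m \<Longrightarrow> \<bar>(B ^\<^sub>m k) $$ (i, j)\<bar> \<le> c * mu ^ k"
    using mat_pow_entry_bound[OF B(1) \<open>0 < m\<close> mu(1)] by blast
  have pow: "lam ^ k * w $ i \<le> (B ^\<^sub>m k *\<^sub>v w) $ i" if "i < m" for k i
    using less_eq_vecD[OF supinvariant_pow[OF B _ w_carrier sup, of k], of i] mu that B w_carrier
    by (simp del: index_mult_mat_vec)
  \<comment> \<open>lam^k w \<le> B^k w = O(mu^k) with mu < lam forces w = 0\<close>
  define S where "S = (\<Sum>j<m. w $ j)"
  have bound: "w $ i \<le> c * S * (mu / lam) ^ k" if "i < m" for i k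
  proof -
    have "lam ^ k * w $ i \<le> (\<Sum>j<m. (B ^\<^sub>m k) $$ (i, j) * w $ j)"
      using pow[OF that, of k] that B w_carrier by (simp add: scalar_prod_def lessThan_atLeast0)
    also have "\<dots> \<le> (\<Sum>j<m. c * mu ^ k * w $ j)"
      using c[OF that] w_nonneg by (intro sum_mono mult_right_mono) (auto intro: abs_le_D1)
    also have "\<dots> = c * mu ^ k * S"
      by (simp add: S_def sum_distrib_left)
    also have "\<dots> = lam ^ k * (c * S * (mu / lam) ^ k)"
      using mu by (simp add: power_divide)
    finally show ?thesis
      using mu by simp
  qed
  have "(\<lambda>k. c * S * (mu / lam) ^ k) \<longlonglongrightarrow> 0"
    using mu by (intro tendsto_mult_right_zero LIMSEQ_power_zero) auto
  then have "w $ i \<le> 0" if "i < m" for i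
    using bound[OF that] by (intro LIMSEQ_le_const[where a = "w $ i"]) auto
  then show ?thesis
    using w_carrier w_nonneg by (intro eq_vecI) (auto intro: antisym)
qed

lemma shift_mat_mult_vec:
  fixes B :: "real mat"
  assumes "B \<in> carrier_mat m m" and "v \<in> carrier_vec m"
  shows "(lam \<cdot>\<^sub>m 1\<^sub>m m - B) *\<^sub>v v = lam \<cdot>\<^sub>v v - B *\<^sub>v v"
proof -
  have "(lam \<cdot>\<^sub>m 1\<^sub>m m - B) *\<^sub>v v = (lam \<cdot>\<^sub>m 1\<^sub>m m) *\<^sub>v v - B *\<^sub>v v"
    using assms by (intro minus_mult_distrib_mat_vec) auto
  then show ?thesis
    using assms(2) by (simp add: smult_mat_mult_vec[of "1\<^sub>m m" m m])
qed

lemma resolvent_exists: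
  fixes B :: "real mat"
  assumes B: "B \<in> carrier_mat m m" and "rho B < \<bar>lam\<bar>" and f: "f \<in> carrier_vec m"
  obtains u where "u \<in> carrier_vec m" and "lam \<cdot>\<^sub>v u - B *\<^sub>v u = f"
proof -
  let ?C = "lam \<cdot>\<^sub>m 1\<^sub>m m - B"
  have C: "?C \<in> carrier_mat m m"
    using B by auto
  have "det ?C \<noteq> 0"
  proof
    assume "det ?C = 0"
    then obtain v where v: "v \<in> carrier_vec m" "v \<noteq> 0\<^sub>v m" "?C *\<^sub>v v = 0\<^sub>v m"
      using det_0_iff_vec_prod_zero_field[OF C] by auto
    then have diff: "lam \<cdot>\<^sub>v v - B *\<^sub>v v = 0\<^sub>v m"
      using shift_mat_mult_vec[OF B] by simp
    have "B *\<^sub>v v = lam \<cdot>\<^sub>v v"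
    proof
      fix i
      assume "i < dim_vec (lam \<cdot>\<^sub>v v)"
      then have "i < m" using v by simp
      then show "(B *\<^sub>v v) $ i = (lam \<cdot>\<^sub>v v) $ i"
        using arg_cong[OF diff, of "\<lambda>x. x $ i"] v(1) B by (simp del: index_mult_mat_vec)
    qed (use v B in simp)
    then have "\<bar>lam\<bar> \<le> rho B"
      using abs_eigenvalue_le_rho[OF B] v B unfolding eigenvector_def by blast
    then show False
      using \<open>rho B < \<bar>lam\<bar>\<close> by linarith
  qed
  then obtain Q where Q: "Q \<in> carrier_mat m m" "?C * Q = 1\<^sub>m m"
    using det_non_zero_imp_unit[OF C, of "()"] unfolding Units_def ring_mat_def by auto
  have "?C *\<^sub>v (Q *\<^sub>v f) = f"
    using assoc_mult_mat_vec[OF C Q(1) f] Q(2) f by simp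
  then have "lam \<cdot>\<^sub>v (Q *\<^sub>v f) - B *\<^sub>v (Q *\<^sub>v f) = f"
    using shift_mat_mult_vec[OF B, of "Q *\<^sub>v f"] Q(1) f by simp
  moreover have "Q *\<^sub>v f \<in> carrier_vec m"
    using Q(1) f by simp
  ultimately show thesis
    using that by blast
qed

lemma resolvent_nonneg:
  assumes B: "B \<in> carrier_mat m m" "nonneg_mat B" and "0 < m" and "rho B < lam"
    and f: "0\<^sub>v m \<le> f"
  obtains u where "0\<^sub>v m \<le> u" and "lam \<cdot>\<^sub>v u - B *\<^sub>v u = f"
proof -
  have "rho B < \<bar>lam\<bar>" and f_carrier: "f \<in> carrier_vec m"
    using \<open>rho B < lam\<close> f by (auto simp: less_eq_vec_def)
  then obtain u where u: "u \<in> carrier_vec m" and Cu: "lam \<cdot>\<^sub>v u - B *\<^sub>v u = f"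
    using resolvent_exists[OF B(1)] by blast
  \<comment> \<open>the negative part of u is a nonnegative supinvariant vector, hence zero\<close>
  define w where "w = vec m (\<lambda>i. max 0 (- u $ i))"
  have w: "0\<^sub>v m \<le> w"
    by (auto simp: w_def less_eq_vec_def)
  have "(lam \<cdot>\<^sub>v w) $ i \<le> (B *\<^sub>v w) $ i" if i: "i < m" for i
  proof (cases "u $ i < 0")
    case True
    have "lam * u $ i = (B *\<^sub>v u) $ i + f $ i"
      using arg_cong[OF Cu, of "\<lambda>v. v $ i"] i u B by (simp del: index_mult_mat_vec)
    moreover have "- (B *\<^sub>v u) $ i \<le> (B *\<^sub>v w) $ i"
    proof -
      have "B *\<^sub>v (- u) \<le> B *\<^sub>v w"
        using u by (intro nonneg_mat_mult_vec_mono[OF B(2,1)]) (auto simp: w_def less_eq_vec_def)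
      then show ?thesis
        using i u B by (auto simp: less_eq_vec_def)
    qed
    moreover have "0 \<le> f $ i"
      using f i by (auto simp: less_eq_vec_def)
    ultimately show ?thesis
      using True i by (simp add: w_def del: index_mult_mat_vec)
  next
    case False
    then show ?thesis
      using less_eq_vecD[OF nonneg_mat_mult_vec[OF B(2,1) w], of i] i B
      by (simp add: w_def del: index_mult_mat_vec)
  qed
  then have "lam \<cdot>\<^sub>v w \<le> B *\<^sub>v w"
    using B by (intro less_eq_vecI[of _ m]) (auto simp: w_def simp del: index_mult_mat_vec)
  then have "w = 0\<^sub>v m"
    using supinvariant_vec_eq_0[OF B \<open>0 < m\<close> \<open>rho B < lam\<close> w] by simp
  have "0 \<le> u $ i" if "i < m" for i
    using arg_cong[OF \<open>w = 0\<^sub>v m\<close>, of "\<lambda>x. x $ i"] that by (simp add: w_def)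
  then have "0\<^sub>v m \<le> u"
    using u by (intro less_eq_vecI) auto
  then show thesis
    using Cu by (rule that)
qed

lemma rho_mono:
  assumes "nonneg_mat B" and "mat_le B C" and "C \<in> carrier_mat m m" and "0 < m"
  shows "rho B \<le> rho C"
proof (rule dense_ge)
  fix lam
  assume "rho C < lam"
  have B: "B \<in> carrier_mat m m"
    using assms(2,3) by (auto simp: mat_le_def)
  have "nonneg_mat C"
    using assms(1,2) unfolding nonneg_mat_def mat_le_def by simp (metis order.trans)
  obtain u where u: "0\<^sub>v m \<le> u" and Cu: "lam \<cdot>\<^sub>v u - C *\<^sub>v u = vec m (\<lambda>_. 1)"
    using resolvent_nonneg[OF assms(3) \<open>nonneg_mat C\<close> assms(4) \<open>rho C < lam\<close>, of "vec m (\<lambda>_. 1)"]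
    by (auto simp: less_eq_vec_def)
  have u_carrier: "u \<in> carrier_vec m"
    using u by (auto simp: less_eq_vec_def)
  have entry: "lam * u $ i = (C *\<^sub>v u) $ i + 1" if "i < m" for i
    using arg_cong[OF Cu, of "\<lambda>x. x $ i"] that u_carrier assms(3) by (simp del: index_mult_mat_vec)
  have Cu_nonneg: "0 \<le> (C *\<^sub>v u) $ i" if "i < m" for i
    using nonneg_mat_mult_vec[OF \<open>nonneg_mat C\<close> assms(3) u] that assms(3)
    by (auto simp: less_eq_vec_def simp del: index_mult_mat_vec)
  have BC: "(B *\<^sub>v u) $ i \<le> (C *\<^sub>v u) $ i" if "i < m" for i
    using mat_le_mult_vec_mono[OF assms(2,3) u] that assms(3)
    by (auto simp: less_eq_vec_def simp del: index_mult_mat_vec)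
  have "0 < u $ i" if "i < m" for i
  proof -
    have "0 < lam * u $ i" using entry[OF that] Cu_nonneg[OF that] by simp
    moreover have "0 \<le> u $ i" using u that by (auto simp: less_eq_vec_def)
    ultimately show ?thesis by (simp add: zero_less_mult_iff)
  qed
  moreover have "B *\<^sub>v u \<le> lam \<cdot>\<^sub>v u"
  proof (rule less_eq_vecI[of _ m])
    fix i
    assume "i < m"
    then show "(B *\<^sub>v u) $ i \<le> (lam \<cdot>\<^sub>v u) $ i"
      using BC[OF \<open>i < m\<close>] entry[OF \<open>i < m\<close>] u_carrier by (simp del: index_mult_mat_vec)
  qed (use B u_carrier in auto)
  ultimately show "rho B \<le> lam"
    using rho_le_subinvariant[OF B assms(1,4) u_carrier] by blast
qed

abbreviation companion_mat :: "nat \<Rightarrow> real mat \<Rightarrow> real mat \<Rightarrow> real mat" where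
  "companion_mat n X Y \<equiv> four_block_mat X Y (1\<^sub>m n) (0\<^sub>m n n)"

abbreviation quadratic_pencil :: "nat \<Rightarrow> real \<Rightarrow> real mat \<Rightarrow> real mat \<Rightarrow> real mat" where
  "quadratic_pencil n lam X Y \<equiv> lam\<^sup>2 \<cdot>\<^sub>m 1\<^sub>m n - lam \<cdot>\<^sub>m X - Y"

lemma companion_mat_carrier:
  "X \<in> carrier_mat n n \<Longrightarrow> Y \<in> carrier_mat n n \<Longrightarrow> companion_mat n X Y \<in> carrier_mat (n + n) (n + n)"
  by auto

lemma nonneg_companion_mat:
  "nonneg_mat X \<Longrightarrow> nonneg_mat Y \<Longrightarrow> X \<in> carrier_mat n n \<Longrightarrow> Y \<in> carrier_mat n n \<Longrightarrow>
    nonneg_mat (companion_mat n X Y)"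
  by (auto simp: nonneg_mat_def mat_le_def)

lemma companion_mat_mono:
  "mat_le X X' \<Longrightarrow> mat_le Y Y' \<Longrightarrow> X \<in> carrier_mat n n \<Longrightarrow> Y \<in> carrier_mat n n \<Longrightarrow>
    mat_le (companion_mat n X Y) (companion_mat n X' Y')"
  by (auto simp: mat_le_def)

lemma companion_mat_mult_vec:
  assumes "X \<in> carrier_mat n n" "Y \<in> carrier_mat n n" "a \<in> carrier_vec n" "b \<in> carrier_vec n"
  shows "companion_mat n X Y *\<^sub>v (a @\<^sub>v b) = (X *\<^sub>v a + Y *\<^sub>v b) @\<^sub>v a"
proof -
  have "0\<^sub>m n n *\<^sub>v b = 0\<^sub>v n"
    using assms(4) by (auto simp: scalar_prod_def)
  then show ?thesis
    using four_block_mat_mult_vec[OF assms(1,2) one_carrier_mat zero_carrier_mat assms(3,4)] assms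
    by simp
qed

lemma quadratic_pencil_mult_vec:
  assumes "X \<in> carrier_mat n n" "Y \<in> carrier_mat n n" "y \<in> carrier_vec n"
  shows "quadratic_pencil n lam X Y *\<^sub>v y = lam\<^sup>2 \<cdot>\<^sub>v y - lam \<cdot>\<^sub>v (X *\<^sub>v y) - Y *\<^sub>v y"
proof -
  have "quadratic_pencil n lam X Y *\<^sub>v y = (lam\<^sup>2 \<cdot>\<^sub>m 1\<^sub>m n - lam \<cdot>\<^sub>m X) *\<^sub>v y - Y *\<^sub>v y"
    using assms by (intro minus_mult_distrib_mat_vec) auto
  also have "(lam\<^sup>2 \<cdot>\<^sub>m 1\<^sub>m n - lam \<cdot>\<^sub>m X) *\<^sub>v y = (lam\<^sup>2 \<cdot>\<^sub>m 1\<^sub>m n) *\<^sub>v y - (lam \<cdot>\<^sub>m X) *\<^sub>v y"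
    using assms by (intro minus_mult_distrib_mat_vec) auto
  finally show ?thesis
    using assms by (simp add: smult_mat_mult_vec[of _ n n])
qed

lemma quadratic_pencil_mult_vec_index:
  assumes "X \<in> carrier_mat n n" "Y \<in> carrier_mat n n" "y \<in> carrier_vec n" "i < n"
  shows "(quadratic_pencil n lam X Y *\<^sub>v y) $ i = lam\<^sup>2 * y $ i - lam * (X *\<^sub>v y) $ i - (Y *\<^sub>v y) $ i"
  using quadratic_pencil_mult_vec[OF assms(1-3)] assms by (simp del: index_mult_mat_vec)

lemma quadratic_pencil_uminus:
  "X \<in> carrier_mat n n \<Longrightarrow> Y \<in> carrier_mat n n \<Longrightarrow>
    quadratic_pencil n lam X (- Y) = lam\<^sup>2 \<cdot>\<^sub>m 1\<^sub>m n - lam \<cdot>\<^sub>m X + Y"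
  by auto

lemma rho_companion_mat_le:
  assumes XY: "X \<in> carrier_mat n n" "Y \<in> carrier_mat n n" "nonneg_mat X" "nonneg_mat Y"
    and "0 < n" and "0 < lam"
    and y: "y \<in> carrier_vec n" "\<forall>i<n. 0 < y $ i"
    and pencil: "0\<^sub>v n \<le> quadratic_pencil n lam X Y *\<^sub>v y"
  shows "rho (companion_mat n X Y) \<le> lam"
proof -
  let ?u = "(lam \<cdot>\<^sub>v y) @\<^sub>v y"
  have Cu: "companion_mat n X Y *\<^sub>v ?u = (lam \<cdot>\<^sub>v (X *\<^sub>v y) + Y *\<^sub>v y) @\<^sub>v (lam \<cdot>\<^sub>v y)"
    using companion_mat_mult_vec[OF XY(1,2) _ y(1)] XY y by (simp add: mult_mat_vec)
  have "lam * (X *\<^sub>v y) $ i + (Y *\<^sub>v y) $ i \<le> lam * (lam * y $ i)" if "i < n" for i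
    using less_eq_vecD[OF pencil, of i] quadratic_pencil_mult_vec_index[OF XY(1,2) y(1) that] that XY
    by (simp add: power2_eq_square)
  then have "companion_mat n X Y *\<^sub>v ?u \<le> lam \<cdot>\<^sub>v ?u"
    unfolding Cu using XY y by (intro less_eq_vecI[of _ "n + n"]) (auto simp del: index_mult_mat_vec)
  moreover have "\<forall>i<n + n. 0 < ?u $ i"
    using y \<open>0 < lam\<close> by auto
  moreover have "?u \<in> carrier_vec (n + n)"
    using y by simp
  ultimately show ?thesis
    using rho_le_subinvariant[OF companion_mat_carrier[OF XY(1,2)] nonneg_companion_mat[OF XY(3,4,1,2)]]
      \<open>0 < n\<close> by simp
qed

lemma rho_companion_mat_lt_1:
  assumes XY: "X \<in> carrier_mat n n" "Y \<in> carrier_mat n n" "nonneg_mat X" "nonneg_mat Y"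
    and "0 < n"
    and y: "y \<in> carrier_vec n" "\<forall>i<n. 0 < y $ i"
    and sub: "\<forall>i<n. (X *\<^sub>v y) $ i + (Y *\<^sub>v y) $ i < y $ i"
  shows "rho (companion_mat n X Y) < 1"
proof -
  \<comment> \<open>as lam tends to 1 the pencil value on y tends to y - X y - Y y > 0\<close>
  have "\<forall>\<^sub>F lam in at_left 1. \<forall>i\<in>{..<n}. 0 < lam\<^sup>2 * y $ i - lam * (X *\<^sub>v y) $ i - (Y *\<^sub>v y) $ i"
  proof (intro eventually_ball_finite ballI)
    fix i
    assume "i \<in> {..<n}"
    have "((\<lambda>lam. lam\<^sup>2 * y $ i - lam * (X *\<^sub>v y) $ i - (Y *\<^sub>v y) $ i)
        \<longlongrightarrow> y $ i - (X *\<^sub>v y) $ i - (Y *\<^sub>v y) $ i) (at_left 1)"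
      by (rule tendsto_eq_intros refl)+ simp
    moreover have "0 < y $ i - (X *\<^sub>v y) $ i - (Y *\<^sub>v y) $ i"
      using sub \<open>i \<in> {..<n}\<close> by (simp add: algebra_simps del: index_mult_mat_vec)
    ultimately show "\<forall>\<^sub>F lam in at_left 1. 0 < lam\<^sup>2 * y $ i - lam * (X *\<^sub>v y) $ i - (Y *\<^sub>v y) $ i"
      by (rule order_tendstoD)
  qed simp
  moreover have "\<forall>\<^sub>F lam in at_left (1 :: real). lam \<in> {0<..<1}"
    by (rule eventually_at_left_real) simp
  ultimately have "\<forall>\<^sub>F lam in at_left 1.
      (\<forall>i\<in>{..<n}. 0 < lam\<^sup>2 * y $ i - lam * (X *\<^sub>v y) $ i - (Y *\<^sub>v y) $ i) \<and> lam \<in> {0<..<1}"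
    by (rule eventually_conj)
  then obtain lam where pencil: "\<forall>i\<in>{..<n}. 0 < lam\<^sup>2 * y $ i - lam * (X *\<^sub>v y) $ i - (Y *\<^sub>v y) $ i"
    and lam: "0 < lam" "lam < 1"
    using eventually_happens'[OF trivial_limit_at_left_real] by fastforce
  have "quadratic_pencil n lam X Y \<in> carrier_mat n n"
    using XY by auto
  then have "0\<^sub>v n \<le> quadratic_pencil n lam X Y *\<^sub>v y"
    using pencil quadratic_pencil_mult_vec_index[OF XY(1,2) y(1)] y(1)
    by (intro less_eq_vecI[of _ n]) (simp_all add: less_imp_le)
  then have "rho (companion_mat n X Y) \<le> lam"
    by (rule rho_companion_mat_le[OF XY \<open>0 < n\<close> lam(1) y])
  with lam show ?thesis
    by simp
qed

lemma companion_mat_pencil_solution: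
  assumes XY: "X \<in> carrier_mat n n" "Y \<in> carrier_mat n n" "nonneg_mat X" "nonneg_mat Y"
    and "0 < n" and "rho (companion_mat n X Y) < lam" and f: "0\<^sub>v n \<le> f"
  obtains y where "0\<^sub>v n \<le> y" and "quadratic_pencil n lam X Y *\<^sub>v y = f"
proof -
  have C: "companion_mat n X Y \<in> carrier_mat (n + n) (n + n)"
    using companion_mat_carrier[OF XY(1,2)] .
  have f_carrier: "f \<in> carrier_vec n"
    using f by (auto simp: less_eq_vec_def)
  have "0\<^sub>v (n + n) \<le> f @\<^sub>v 0\<^sub>v n"
    using f by (auto simp: less_eq_vec_def)
  then obtain u where u: "0\<^sub>v (n + n) \<le> u"
    and res: "lam \<cdot>\<^sub>v u - companion_mat n X Y *\<^sub>v u = f @\<^sub>v 0\<^sub>v n"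
    using resolvent_nonneg[OF C nonneg_companion_mat[OF XY(3,4,1,2)] _ \<open>rho _ < lam\<close>]
      \<open>0 < n\<close> by auto
  define a where "a = vec n (\<lambda>i. u $ i)"
  define y where "y = vec n (\<lambda>i. u $ (n + i))"
  have a: "a \<in> carrier_vec n" and y: "y \<in> carrier_vec n"
    by (simp_all add: a_def y_def)
  have "u = a @\<^sub>v y"
    using u by (intro eq_vecI) (auto simp: a_def y_def less_eq_vec_def)
  then have eq: "lam \<cdot>\<^sub>v (a @\<^sub>v y) - ((X *\<^sub>v a + Y *\<^sub>v y) @\<^sub>v a) = f @\<^sub>v 0\<^sub>v n"
    using res companion_mat_mult_vec[OF XY(1,2) a y] by simp
  have top: "lam * a $ i - (X *\<^sub>v a) $ i - (Y *\<^sub>v y) $ i = f $ i" if "i < n" for i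
    using arg_cong[OF eq, of "\<lambda>v. v $ i"] that a y f_carrier XY by (simp del: index_mult_mat_vec)
  have bottom: "lam * y $ i - a $ i = 0" if "i < n" for i
    using arg_cong[OF eq, of "\<lambda>v. v $ (n + i)"] that a y f_carrier XY by (simp del: index_mult_mat_vec)
  have "a = lam \<cdot>\<^sub>v y"
    using a y bottom by (intro eq_vecI) auto
  then have "quadratic_pencil n lam X Y *\<^sub>v y = f"
    using XY y f_carrier top unfolding quadratic_pencil_mult_vec[OF XY(1,2) y]
    by (intro eq_vecI) (auto simp: mult_mat_vec power2_eq_square mult.assoc simp del: index_mult_mat_vec)
  moreover have "0\<^sub>v n \<le> y"
    using u by (auto simp: y_def less_eq_vec_def)
  ultimately show thesis
    using that by blast
qed

lemma quadratic_pencil_solution_pos: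
  assumes XY: "X \<in> carrier_mat n n" "Y \<in> carrier_mat n n" "nonneg_mat X" "nonneg_mat Y"
    and "0 < lam" and y: "0\<^sub>v n \<le> y" and eq: "quadratic_pencil n lam X Y *\<^sub>v y = f"
    and "i < n" and "0 < f $ i"
  shows "0 < y $ i"
proof -
  have "lam\<^sup>2 * y $ i = f $ i + lam * (X *\<^sub>v y) $ i + (Y *\<^sub>v y) $ i"
    using quadratic_pencil_mult_vec_index[OF XY(1,2) _ \<open>i < n\<close>, of y lam] eq y
    by (auto simp: less_eq_vec_def)
  moreover have "0 \<le> (X *\<^sub>v y) $ i" and "0 \<le> (Y *\<^sub>v y) $ i"
    using less_eq_vecD[OF nonneg_mat_mult_vec[OF XY(3,1) y], of i]
      less_eq_vecD[OF nonneg_mat_mult_vec[OF XY(4,2) y], of i] XY \<open>i < n\<close>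
    by (simp_all del: index_mult_mat_vec)
  ultimately have "0 < lam\<^sup>2 * y $ i"
    using \<open>0 < lam\<close> \<open>0 < f $ i\<close> by (smt (verit) mult_nonneg_nonneg)
  moreover have "0 \<le> y $ i"
    using less_eq_vecD[OF y, of i] y \<open>i < n\<close> by (auto simp: less_eq_vec_def)
  ultimately show ?thesis
    by (simp add: zero_less_mult_iff)
qed

lemma mat_inv_mult_splitting_combination:
  assumes "double_splitting n A P R S"
  shows "mat_inv P * (a \<cdot>\<^sub>m P - b \<cdot>\<^sub>m R + S) = a \<cdot>\<^sub>m 1\<^sub>m n - b \<cdot>\<^sub>m (mat_inv P * R) + mat_inv P * S"
proof -
  have P: "P \<in> carrier_mat n n" and R: "R \<in> carrier_mat n n" and S: "S \<in> carrier_mat n n"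
    and "invertible_mat P"
    using assms by (auto simp: double_splitting_def)
  then have Q: "mat_inv P \<in> carrier_mat n n" and QP: "mat_inv P * P = 1\<^sub>m n"
    using mat_inv_carrier mat_inv_left by blast+
  have "mat_inv P * (a \<cdot>\<^sub>m P - b \<cdot>\<^sub>m R + S) = mat_inv P * (a \<cdot>\<^sub>m P - b \<cdot>\<^sub>m R) + mat_inv P * S"
    using Q P R S by (intro mult_add_distrib_mat) auto
  also have "mat_inv P * (a \<cdot>\<^sub>m P - b \<cdot>\<^sub>m R) = mat_inv P * (a \<cdot>\<^sub>m P) - mat_inv P * (b \<cdot>\<^sub>m R)"
    using Q P R by (intro mult_minus_distrib_mat) auto
  finally show ?thesis
    using Q P R QP by (simp add: mult_smult_distrib)
qed

lemma mat_inv_mult_splitting: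
  assumes "double_splitting n A P R S"
  shows "mat_inv P * A = 1\<^sub>m n - mat_inv P * R + mat_inv P * S"
proof -
  have A: "A = P - R + S" and P: "P \<in> carrier_mat n n" and R: "R \<in> carrier_mat n n"
    and S: "S \<in> carrier_mat n n" and Q: "mat_inv P \<in> carrier_mat n n"
    using assms mat_inv_carrier by (auto simp: double_splitting_def)
  have "1 \<cdot>\<^sub>m P - 1 \<cdot>\<^sub>m R + S = A"
    using A P R S by auto
  moreover have "1 \<cdot>\<^sub>m 1\<^sub>m n - 1 \<cdot>\<^sub>m (mat_inv P * R) = 1\<^sub>m n - mat_inv P * R"
    using Q R by auto
  ultimately show ?thesis
    using mat_inv_mult_splitting_combination[OF assms, of 1 1] by simp
qed

lemma double_regular_imp_weak_regular_splitting:
  assumes "double_regular_splitting n A P R S"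
  shows "double_weak_regular_splitting n A P R S"
proof -
  have "mat_inv P \<in> carrier_mat n n"
    using assms mat_inv_carrier by (auto simp: double_regular_splitting_def double_splitting_def)
  then show ?thesis
    using assms mult_nonneg_nonneg_mat mult_nonneg_nonpos_mat
    by (auto simp: double_regular_splitting_def double_weak_regular_splitting_def
        double_splitting_def)
qed

lemma double_weak_regular_splitting_carrier:
  assumes "double_weak_regular_splitting n A P R S"
  shows "mat_inv P \<in> carrier_mat n n" and "R \<in> carrier_mat n n" and "S \<in> carrier_mat n n"
  using assms mat_inv_carrier
  by (auto simp: double_weak_regular_splitting_def double_splitting_def)

lemma rho_double_splitting_companion_lt_1:
  assumes "0 < n" and "monotone_mat A" and split: "double_weak_regular_splitting n A P R S"
  shows "rho (companion_mat n (mat_inv P * R) (- (mat_inv P * S))) < 1"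
proof -
  let ?e = "vec n (\<lambda>_. 1 :: real)" and ?Q = "mat_inv P"
  let ?H = "?Q * R" and ?K = "?Q * S"
  have A: "A \<in> carrier_mat n n" and P: "P \<in> carrier_mat n n" and "invertible_mat P"
    and R: "R \<in> carrier_mat n n" and S: "S \<in> carrier_mat n n"
    and signs: "nonneg_mat ?Q" "nonneg_mat ?H" "nonpos_mat ?K"
    and ds: "double_splitting n A P R S"
    using split by (auto simp: double_weak_regular_splitting_def double_splitting_def)
  have Q: "?Q \<in> carrier_mat n n"
    using mat_inv_carrier[OF \<open>invertible_mat P\<close> P] .
  have H: "?H \<in> carrier_mat n n" and K: "?K \<in> carrier_mat n n"
    using Q R S by auto
  have "invertible_mat A" and "nonneg_mat (mat_inv A)"
    using assms(2) by (auto simp: monotone_mat_def)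
  have A': "mat_inv A \<in> carrier_mat n n"
    using mat_inv_carrier[OF \<open>invertible_mat A\<close> A] .
  \<comment> \<open>the test vector is A^-1 e, on which I - H + K = P^-1 A takes the positive value P^-1 e\<close>
  define y where "y = mat_inv A *\<^sub>v ?e"
  have y: "y \<in> carrier_vec n" "\<forall>i<n. 0 < y $ i"
    using A' mat_inv_mult_ones_pos[OF \<open>invertible_mat A\<close> A \<open>nonneg_mat (mat_inv A)\<close>]
    by (auto simp: y_def)
  have "(?Q * A) *\<^sub>v y = ?Q *\<^sub>v ?e"
    using assoc_mult_mat_vec[OF Q A y(1)] assoc_mult_mat_vec[OF A A', of ?e]
      mat_inv_right[OF \<open>invertible_mat A\<close> A] by (simp add: y_def)
  moreover have "(?Q * A) *\<^sub>v y = (1\<^sub>m n - ?H) *\<^sub>v y + ?K *\<^sub>v y"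
    unfolding mat_inv_mult_splitting[OF ds]
    using add_mult_distrib_mat_vec[OF minus_carrier_mat[OF H] K y(1)] .
  moreover have "(1\<^sub>m n - ?H) *\<^sub>v y = y - ?H *\<^sub>v y"
    using minus_mult_distrib_mat_vec[OF one_carrier_mat H y(1)] y(1) by simp
  ultimately have eq: "y - ?H *\<^sub>v y + ?K *\<^sub>v y = ?Q *\<^sub>v ?e"
    by simp
  have "(?H *\<^sub>v y) $ i + (- ?K *\<^sub>v y) $ i < y $ i" if "i < n" for i
    using arg_cong[OF eq, of "\<lambda>v. v $ i"] mat_inv_mult_ones_pos[OF \<open>invertible_mat P\<close> P signs(1) that]
      Q R S y(1) that
    by (simp del: index_mult_mat_vec)
  then show ?thesis
    using rho_companion_mat_lt_1[OF H _ signs(2) nonneg_mat_uminus[OF signs(3)] \<open>0 < n\<close> y] K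
    by auto
qed

lemma double_weak_regular_splitting_pencil_solution:
  assumes "0 < n" and split: "double_weak_regular_splitting n A P R S"
    and lam: "rho (companion_mat n (mat_inv P * R) (- (mat_inv P * S))) < lam"
  obtains y where "y \<in> carrier_vec n" and "\<forall>i<n. 0 < y $ i"
    and "(lam\<^sup>2 \<cdot>\<^sub>m P - lam \<cdot>\<^sub>m R + S) *\<^sub>v y = vec n (\<lambda>_. 1)"
proof -
  let ?e = "vec n (\<lambda>_. 1 :: real)" and ?Q = "mat_inv P"
  let ?H = "?Q * R" and ?K = "?Q * S" and ?M = "lam\<^sup>2 \<cdot>\<^sub>m P - lam \<cdot>\<^sub>m R + S"
  have ds: "double_splitting n A P R S" and P: "P \<in> carrier_mat n n" and "invertible_mat P"
    and R: "R \<in> carrier_mat n n" and S: "S \<in> carrier_mat n n"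
    and signs: "nonneg_mat ?Q" "nonneg_mat ?H" "nonpos_mat ?K"
    using split by (auto simp: double_weak_regular_splitting_def double_splitting_def)
  have Q: "?Q \<in> carrier_mat n n"
    using mat_inv_carrier[OF \<open>invertible_mat P\<close> P] .
  have H: "?H \<in> carrier_mat n n" and K: "?K \<in> carrier_mat n n" and negK: "- ?K \<in> carrier_mat n n"
    using Q R S by auto
  have "0 < lam"
    using rho_nonneg[OF companion_mat_carrier[OF H negK]] lam \<open>0 < n\<close> by simp
  have "0\<^sub>v n \<le> ?e"
    by (simp add: less_eq_vec_def)
  then have "0\<^sub>v n \<le> ?Q *\<^sub>v ?e"
    by (rule nonneg_mat_mult_vec[OF signs(1) Q])
  then obtain y where y: "0\<^sub>v n \<le> y" and y_eq: "quadratic_pencil n lam ?H (- ?K) *\<^sub>v y = ?Q *\<^sub>v ?e"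
    by (rule companion_mat_pencil_solution[OF H negK signs(2) nonneg_mat_uminus[OF signs(3)] \<open>0 < n\<close> lam])
  have y_carrier: "y \<in> carrier_vec n"
    using y by (auto simp: less_eq_vec_def)
  have "\<forall>i<n. 0 < y $ i"
    using quadratic_pencil_solution_pos[OF H negK signs(2) nonneg_mat_uminus[OF signs(3)] \<open>0 < lam\<close> y y_eq]
      mat_inv_mult_ones_pos[OF \<open>invertible_mat P\<close> P signs(1)] by blast
  moreover have "?M *\<^sub>v y = ?e"
  proof -
    have pencil: "quadratic_pencil n lam ?H (- ?K) = ?Q * ?M"
      unfolding mat_inv_mult_splitting_combination[OF ds] by (rule quadratic_pencil_uminus[OF H K])
    have M: "?M \<in> carrier_mat n n"
      using P R S by auto
    have PQ: "P *\<^sub>v (?Q *\<^sub>v v) = v" if "v \<in> carrier_vec n" for v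
      using assoc_mult_mat_vec[OF P Q that] mat_inv_right[OF \<open>invertible_mat P\<close> P] that by simp
    have "?M *\<^sub>v y = P *\<^sub>v (?Q *\<^sub>v (?M *\<^sub>v y))"
      using M y_carrier by (simp add: PQ)
    also have "\<dots> = P *\<^sub>v (quadratic_pencil n lam ?H (- ?K) *\<^sub>v y)"
      unfolding pencil using assoc_mult_mat_vec[OF Q M y_carrier] by simp
    also have "\<dots> = ?e"
      by (simp add: y_eq PQ)
    finally show ?thesis .
  qed
  ultimately show thesis
    using that y_carrier by blast
qed

lemma double_regular_splitting_mult_vec_nonneg:
  assumes split: "double_regular_splitting n A P R S" and lam: "0 < lam" "lam \<le> 1"
    and y: "0\<^sub>v n \<le> y" and M: "0\<^sub>v n \<le> (lam\<^sup>2 \<cdot>\<^sub>m P - lam \<cdot>\<^sub>m R + S) *\<^sub>v y"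
  shows "0\<^sub>v n \<le> A *\<^sub>v y"
proof -
  let ?M = "lam\<^sup>2 \<cdot>\<^sub>m P - lam \<cdot>\<^sub>m R + S"
  have A: "A = P - R + S" and P: "P \<in> carrier_mat n n" and R: "R \<in> carrier_mat n n"
    and S: "S \<in> carrier_mat n n" and "nonneg_mat R" "nonpos_mat S" and A_carrier: "A \<in> carrier_mat n n"
    using split by (auto simp: double_regular_splitting_def double_splitting_def)
  have negS: "- S \<in> carrier_mat n n"
    using S by simp
  have y_carrier: "y \<in> carrier_vec n"
    using y by (auto simp: less_eq_vec_def)
  have "lam\<^sup>2 \<cdot>\<^sub>m A = (?M + (lam * (1 - lam)) \<cdot>\<^sub>m R) + (1 - lam\<^sup>2) \<cdot>\<^sub>m (- S)"
    (is "?l = ?r")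
  proof (rule eq_matI)
    fix i j
    assume "i < dim_row ?r" and "j < dim_col ?r"
    then show "?l $$ (i, j) = ?r $$ (i, j)"
      using A P R S by (simp add: power2_eq_square algebra_simps)
  qed (use A P R S in auto)
  then have "(lam\<^sup>2 \<cdot>\<^sub>m A) *\<^sub>v y = (?M + (lam * (1 - lam)) \<cdot>\<^sub>m R) *\<^sub>v y + ((1 - lam\<^sup>2) \<cdot>\<^sub>m (- S)) *\<^sub>v y"
    using P R S y_carrier by (auto intro: add_mult_distrib_mat_vec)
  also have "(?M + (lam * (1 - lam)) \<cdot>\<^sub>m R) *\<^sub>v y = ?M *\<^sub>v y + ((lam * (1 - lam)) \<cdot>\<^sub>m R) *\<^sub>v y"
    using P R S y_carrier by (auto intro: add_mult_distrib_mat_vec)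
  finally have eq: "lam\<^sup>2 \<cdot>\<^sub>v (A *\<^sub>v y)
      = ?M *\<^sub>v y + (lam * (1 - lam)) \<cdot>\<^sub>v (R *\<^sub>v y) + (1 - lam\<^sup>2) \<cdot>\<^sub>v (- S *\<^sub>v y)"
    using A P R S y_carrier by (simp add: smult_mat_mult_vec[of _ n n])
  have "0 \<le> (A *\<^sub>v y) $ i" if "i < n" for i
  proof -
    have "lam\<^sup>2 * (A *\<^sub>v y) $ i
        = (?M *\<^sub>v y) $ i + (lam * (1 - lam)) * (R *\<^sub>v y) $ i + (1 - lam\<^sup>2) * (- S *\<^sub>v y) $ i"
      using arg_cong[OF eq, of "\<lambda>v. v $ i"] that A P R S y_carrier by (simp del: index_mult_mat_vec)
    moreover have "0 \<le> (?M *\<^sub>v y) $ i" "0 \<le> (R *\<^sub>v y) $ i" "0 \<le> (- S *\<^sub>v y) $ i"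
      using less_eq_vecD[OF M] nonneg_mat_mult_vec[OF \<open>nonneg_mat R\<close> R y]
        nonneg_mat_mult_vec[OF nonneg_mat_uminus[OF \<open>nonpos_mat S\<close>] negS y] that P R S
      by (auto simp del: index_mult_mat_vec uminus_mult_mat_vec dest: less_eq_vecD)
    moreover have "0 \<le> 1 - lam\<^sup>2"
      using lam by (simp add: power_le_one)
    ultimately have "0 \<le> lam\<^sup>2 * (A *\<^sub>v y) $ i"
      using lam by simp
    then show ?thesis
      using lam by (simp add: zero_le_mult_iff)
  qed
  then show ?thesis
    using A_carrier y_carrier by (intro less_eq_vecI[of _ n]) (auto simp del: index_mult_mat_vec)
qed

lemma double_weak_regular_splitting_mult_vec_nonneg:
  assumes split: "double_weak_regular_splitting n A P R S" and "lam \<le> 1"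
    and y: "0\<^sub>v n \<le> y" and Ay: "0\<^sub>v n \<le> A *\<^sub>v y"
  shows "0\<^sub>v n \<le> (1\<^sub>m n - lam \<cdot>\<^sub>m (mat_inv P * R) + mat_inv P * S) *\<^sub>v y"
proof -
  let ?Q = "mat_inv P"
  let ?H = "?Q * R" and ?K = "?Q * S"
  have ds: "double_splitting n A P R S" and A: "A \<in> carrier_mat n n" and P: "P \<in> carrier_mat n n"
    and "invertible_mat P" and R: "R \<in> carrier_mat n n" and S: "S \<in> carrier_mat n n"
    and signs: "nonneg_mat ?Q" "nonneg_mat ?H"
    using split by (auto simp: double_weak_regular_splitting_def double_splitting_def)
  have Q: "?Q \<in> carrier_mat n n"
    using mat_inv_carrier[OF \<open>invertible_mat P\<close> P] .
  have H: "?H \<in> carrier_mat n n" and K: "?K \<in> carrier_mat n n"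
    using Q R S by auto
  have y_carrier: "y \<in> carrier_vec n"
    using y by (auto simp: less_eq_vec_def)
  have "1\<^sub>m n - lam \<cdot>\<^sub>m X + Y = (1\<^sub>m n - X + Y) + (1 - lam) \<cdot>\<^sub>m X" (is "?l = ?r")
    if "X \<in> carrier_mat n n" "Y \<in> carrier_mat n n" for X Y :: "real mat"
  proof (rule eq_matI)
    fix i j
    assume "i < dim_row ?r" and "j < dim_col ?r"
    then show "?l $$ (i, j) = ?r $$ (i, j)"
      using that by (simp add: algebra_simps)
  qed (use that in auto)
  then have "1\<^sub>m n - lam \<cdot>\<^sub>m ?H + ?K = ?Q * A + (1 - lam) \<cdot>\<^sub>m ?H"
    unfolding mat_inv_mult_splitting[OF ds] using H K by blast
  then have eq: "(1\<^sub>m n - lam \<cdot>\<^sub>m ?H + ?K) *\<^sub>v y = ?Q *\<^sub>v (A *\<^sub>v y) + (1 - lam) \<cdot>\<^sub>v (?H *\<^sub>v y)"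
    using Q A H y_carrier
    by (simp add: add_mult_distrib_mat_vec[of _ n n] smult_mat_mult_vec[of _ n n])
  have "0 \<le> (?Q *\<^sub>v (A *\<^sub>v y)) $ i" and "0 \<le> (?H *\<^sub>v y) $ i" if "i < n" for i
    using less_eq_vecD[OF nonneg_mat_mult_vec[OF signs(1) Q Ay], of i]
      less_eq_vecD[OF nonneg_mat_mult_vec[OF signs(2) H y], of i] that Q H
    by (simp_all del: index_mult_mat_vec)
  then show ?thesis
    unfolding eq using \<open>lam \<le> 1\<close> Q A H y_carrier
    by (intro less_eq_vecI[of _ n]) (simp_all del: index_mult_mat_vec)
qed

lemma quadratic_pencil_two_stage:
  assumes "H1 \<in> carrier_mat n n" "K1 \<in> carrier_mat n n" "H2 \<in> carrier_mat n n" "K2 \<in> carrier_mat n n"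
  shows "quadratic_pencil n lam (H2 - K2 * H1) (K2 * K1)
    = quadratic_pencil n lam H2 (- K2) - K2 * (1\<^sub>m n - lam \<cdot>\<^sub>m H1 + K1)"
proof -
  have "K2 * (1\<^sub>m n - lam \<cdot>\<^sub>m H1 + K1) = K2 * (1\<^sub>m n - lam \<cdot>\<^sub>m H1) + K2 * K1"
    using assms by (intro mult_add_distrib_mat) auto
  also have "K2 * (1\<^sub>m n - lam \<cdot>\<^sub>m H1) = K2 * 1\<^sub>m n - K2 * (lam \<cdot>\<^sub>m H1)"
    using assms by (intro mult_minus_distrib_mat) auto
  finally have "K2 * (1\<^sub>m n - lam \<cdot>\<^sub>m H1 + K1) = K2 - lam \<cdot>\<^sub>m (K2 * H1) + K2 * K1"
    using assms by (simp add: mult_smult_distrib)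
  moreover have "quadratic_pencil n lam (H2 - KH) KK = quadratic_pencil n lam H2 (- K2) - (K2 - lam \<cdot>\<^sub>m KH + KK)"
    if "KH \<in> carrier_mat n n" "KK \<in> carrier_mat n n" for KH KK :: "real mat"
    using that assms by (intro eq_matI) (auto simp: algebra_simps)
  ultimately show ?thesis
    using assms by simp
qed

lemma two_stage_pencil_nonneg:
  fixes P1 R1 S1 P2 R2 S2 :: "real mat"
  defines "H1 \<equiv> mat_inv P1 * R1" and "K1 \<equiv> mat_inv P1 * S1"
    and "H2 \<equiv> mat_inv P2 * R2" and "K2 \<equiv> mat_inv P2 * S2"
  assumes split1: "double_weak_regular_splitting n A P1 R1 S1"
    and split2: "double_regular_splitting n A P2 R2 S2"
    and lam: "0 < lam" "lam \<le> 1"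
    and y: "0\<^sub>v n \<le> y" and M2: "(lam\<^sup>2 \<cdot>\<^sub>m P2 - lam \<cdot>\<^sub>m R2 + S2) *\<^sub>v y = vec n (\<lambda>_. 1)"
  shows "0\<^sub>v n \<le> quadratic_pencil n lam (H2 - K2 * H1) (K2 * K1) *\<^sub>v y"
proof -
  let ?e = "vec n (\<lambda>_. 1 :: real)" and ?M2 = "lam\<^sup>2 \<cdot>\<^sub>m P2 - lam \<cdot>\<^sub>m R2 + S2"
  let ?G = "1\<^sub>m n - lam \<cdot>\<^sub>m H1 + K1"
  have weak2: "double_weak_regular_splitting n A P2 R2 S2"
    using double_regular_imp_weak_regular_splitting[OF split2] .
  have "nonneg_mat (mat_inv P2)" "nonpos_mat K2" and ds2: "double_splitting n A P2 R2 S2"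
    and P2: "P2 \<in> carrier_mat n n" and R2: "R2 \<in> carrier_mat n n" and S2: "S2 \<in> carrier_mat n n"
    using weak2 by (auto simp: double_weak_regular_splitting_def double_splitting_def K2_def)
  have Q2: "mat_inv P2 \<in> carrier_mat n n"
    using double_weak_regular_splitting_carrier[OF weak2] by simp
  have H1: "H1 \<in> carrier_mat n n" and K1: "K1 \<in> carrier_mat n n"
    and H2: "H2 \<in> carrier_mat n n" and K2: "K2 \<in> carrier_mat n n"
    using double_weak_regular_splitting_carrier[OF split1] double_weak_regular_splitting_carrier[OF weak2]
    by (auto simp: H1_def K1_def H2_def K2_def)
  have M2_carrier: "?M2 \<in> carrier_mat n n" and G: "?G \<in> carrier_mat n n"
    and pencil2: "quadratic_pencil n lam H2 (- K2) \<in> carrier_mat n n"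
    using P2 R2 S2 H1 K1 H2 K2 by auto
  have e_nonneg: "0\<^sub>v n \<le> ?e"
    by (simp add: less_eq_vec_def)
  have "0\<^sub>v n \<le> A *\<^sub>v y"
    using double_regular_splitting_mult_vec_nonneg[OF split2 lam y] M2 e_nonneg by simp
  then have g: "0\<^sub>v n \<le> ?G *\<^sub>v y"
    unfolding H1_def K1_def using double_weak_regular_splitting_mult_vec_nonneg[OF split1 lam(2) y]
    by simp
  have "quadratic_pencil n lam H2 (- K2) = mat_inv P2 * ?M2"
    unfolding mat_inv_mult_splitting_combination[OF ds2] H2_def K2_def
    by (rule quadratic_pencil_uminus[OF H2[unfolded H2_def] K2[unfolded K2_def]])
  then have "quadratic_pencil n lam H2 (- K2) *\<^sub>v y = mat_inv P2 *\<^sub>v ?e"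
    using assoc_mult_mat_vec[OF Q2 M2_carrier] y M2 by (simp add: less_eq_vec_def)
  then have eq: "quadratic_pencil n lam (H2 - K2 * H1) (K2 * K1) *\<^sub>v y
      = mat_inv P2 *\<^sub>v ?e - K2 *\<^sub>v (?G *\<^sub>v y)"
    unfolding quadratic_pencil_two_stage[OF H1 K1 H2 K2]
    using minus_mult_distrib_mat_vec[OF pencil2 mult_carrier_mat[OF K2 G]]
      assoc_mult_mat_vec[OF K2 G] y by (simp add: less_eq_vec_def)
  have "(K2 *\<^sub>v (?G *\<^sub>v y)) $ i \<le> 0" and "0 \<le> (mat_inv P2 *\<^sub>v ?e) $ i" if "i < n" for i
    using less_eq_vecD[OF nonpos_mat_mult_vec[OF \<open>nonpos_mat K2\<close> K2 g], of i]
      less_eq_vecD[OF nonneg_mat_mult_vec[OF \<open>nonneg_mat (mat_inv P2)\<close> Q2 e_nonneg], of i] that Q2 K2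
    by (simp_all del: index_mult_mat_vec)
  then have "(K2 *\<^sub>v (?G *\<^sub>v y)) $ i \<le> (mat_inv P2 *\<^sub>v ?e) $ i" if "i < n" for i
    using that by (meson order.trans)
  then show ?thesis
    unfolding eq using Q2 K2 G y
    by (intro less_eq_vecI[of _ n]) (auto simp: less_eq_vec_def simp del: index_mult_mat_vec)
qed

lemma rho_two_stage_companion_le:
  fixes P1 R1 S1 P2 R2 S2 :: "real mat"
  defines "H1 \<equiv> mat_inv P1 * R1" and "K1 \<equiv> mat_inv P1 * S1"
    and "H2 \<equiv> mat_inv P2 * R2" and "K2 \<equiv> mat_inv P2 * S2"
  assumes "0 < n"
    and split1: "double_weak_regular_splitting n A P1 R1 S1"
    and split2: "double_regular_splitting n A P2 R2 S2"
    and lam: "rho (companion_mat n H2 (- K2)) < lam" "lam < 1"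
  shows "rho (companion_mat n (H2 - K2 * H1) (K2 * K1)) \<le> lam"
proof -
  have weak2: "double_weak_regular_splitting n A P2 R2 S2"
    using double_regular_imp_weak_regular_splitting[OF split2] .
  have signs: "nonneg_mat H1" "nonpos_mat K1" "nonneg_mat H2" "nonpos_mat K2"
    using split1 weak2 by (auto simp: double_weak_regular_splitting_def H1_def K1_def H2_def K2_def)
  have H1: "H1 \<in> carrier_mat n n" and K1: "K1 \<in> carrier_mat n n"
    and H2: "H2 \<in> carrier_mat n n" and K2: "K2 \<in> carrier_mat n n"
    using double_weak_regular_splitting_carrier[OF split1] double_weak_regular_splitting_carrier[OF weak2]
    by (auto simp: H1_def K1_def H2_def K2_def)
  have "0 < lam"
    using rho_nonneg[OF companion_mat_carrier[OF H2 uminus_carrier_mat[OF K2]]] lam \<open>0 < n\<close> by simp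
  obtain y where y: "y \<in> carrier_vec n" "\<forall>i<n. 0 < y $ i"
    and M2: "(lam\<^sup>2 \<cdot>\<^sub>m P2 - lam \<cdot>\<^sub>m R2 + S2) *\<^sub>v y = vec n (\<lambda>_. 1)"
    using double_weak_regular_splitting_pencil_solution[OF \<open>0 < n\<close> weak2 lam(1)[unfolded H2_def K2_def]] .
  have "0\<^sub>v n \<le> y"
    using y by (intro less_eq_vecI[of _ n]) (auto simp: less_imp_le)
  then have "0\<^sub>v n \<le> quadratic_pencil n lam (H2 - K2 * H1) (K2 * K1) *\<^sub>v y"
    unfolding H1_def K1_def H2_def K2_def
    using two_stage_pencil_nonneg[OF split1 split2 \<open>0 < lam\<close> _ _ M2] lam(2) by simp
  moreover have "nonneg_mat (H2 - K2 * H1)"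
    using nonneg_mat_diff[OF signs(3) mult_nonpos_nonneg_mat[OF signs(4,1) K2 H1] H2] K2 H1 by simp
  moreover have "nonneg_mat (K2 * K1)"
    using mult_nonpos_nonpos_mat[OF signs(4,2) K2 K1] .
  moreover have "H2 - K2 * H1 \<in> carrier_mat n n" and "K2 * K1 \<in> carrier_mat n n"
    using H1 K1 H2 K2 by auto
  ultimately show ?thesis
    using rho_companion_mat_le[OF _ _ _ _ \<open>0 < n\<close> \<open>0 < lam\<close> y] by blast
qed

lemma rho_two_stage_companion_le_rho:
  fixes P1 R1 S1 P2 R2 S2 :: "real mat"
  defines "H1 \<equiv> mat_inv P1 * R1" and "K1 \<equiv> mat_inv P1 * S1"
    and "H2 \<equiv> mat_inv P2 * R2" and "K2 \<equiv> mat_inv P2 * S2"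
  assumes "0 < n"
    and "double_weak_regular_splitting n A P1 R1 S1"
    and "double_regular_splitting n A P2 R2 S2"
    and "rho (companion_mat n H2 (- K2)) < 1"
  shows "rho (companion_mat n (H2 - K2 * H1) (K2 * K1)) \<le> rho (companion_mat n H2 (- K2))"
  using dense_ge_bounded[OF assms(8)] rho_two_stage_companion_le[OF assms(5-7)]
  unfolding H1_def K1_def H2_def K2_def by blast

lemma rho_double_splitting_companion_mono:
  assumes "0 < n"
    and split1: "double_weak_regular_splitting n A1 P1 R1 S1"
    and split2: "double_weak_regular_splitting n A2 P2 R2 S2"
    and "mat_le (mat_inv P2 * R2) (mat_inv P1 * R1)" and "mat_le (mat_inv P1 * S1) (mat_inv P2 * S2)"
  shows "rho (companion_mat n (mat_inv P2 * R2) (- (mat_inv P2 * S2)))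
    \<le> rho (companion_mat n (mat_inv P1 * R1) (- (mat_inv P1 * S1)))"
proof (rule rho_mono)
  have H1: "mat_inv P1 * R1 \<in> carrier_mat n n" and K1: "mat_inv P1 * S1 \<in> carrier_mat n n"
    and H2: "mat_inv P2 * R2 \<in> carrier_mat n n" and K2: "mat_inv P2 * S2 \<in> carrier_mat n n"
    using double_weak_regular_splitting_carrier[OF split1] double_weak_regular_splitting_carrier[OF split2]
    by auto
  have "nonneg_mat (mat_inv P2 * R2)" and "nonpos_mat (mat_inv P2 * S2)"
    using split2 by (auto simp: double_weak_regular_splitting_def)
  then show "nonneg_mat (companion_mat n (mat_inv P2 * R2) (- (mat_inv P2 * S2)))"
    using nonneg_companion_mat[OF _ nonneg_mat_uminus] H2 K2 by simp
  show "mat_le (companion_mat n (mat_inv P2 * R2) (- (mat_inv P2 * S2)))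
      (companion_mat n (mat_inv P1 * R1) (- (mat_inv P1 * S1)))"
    using companion_mat_mono[OF assms(4) mat_le_uminus[OF assms(5)]] H2 K2 by simp
  show "companion_mat n (mat_inv P1 * R1) (- (mat_inv P1 * S1)) \<in> carrier_mat (n + n) (n + n)"
    using H1 K1 by auto
qed (use \<open>0 < n\<close> in simp)

theorem corollary3p7:
  fixes n :: nat and A P1 R1 S1 P2 R2 S2 :: "real mat"
  assumes "0 < n"
    and "A \<in> carrier_mat n n"
    and "monotone_mat A"
    and "double_weak_regular_splitting n A P1 R1 S1"
    and "double_regular_splitting n A P2 R2 S2"
    and "(1::real) \<notin> spectrum (S2 * mat_inv P1)"
    and "monotone_mat ((1\<^sub>m n - S2 * mat_inv P1) * A)"
    and "mat_le (mat_inv P2 * R2) (mat_inv P1 * R1)"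
    and "mat_le (mat_inv P1 * S1) (mat_inv P2 * S2)"
  shows "rho (four_block_mat
                (mat_inv P2 * R2 - mat_inv P2 * S2 * mat_inv P1 * R1)
                (mat_inv P2 * S2 * mat_inv P1 * S1)
                (1\<^sub>m n) (0\<^sub>m n n))
           \<le> min (rho (four_block_mat (mat_inv P1 * R1) (- (mat_inv P1 * S1)) (1\<^sub>m n) (0\<^sub>m n n)))
                 (rho (four_block_mat (mat_inv P2 * R2) (- (mat_inv P2 * S2)) (1\<^sub>m n) (0\<^sub>m n n)))
       \<and> min (rho (four_block_mat (mat_inv P1 * R1) (- (mat_inv P1 * S1)) (1\<^sub>m n) (0\<^sub>m n n)))
             (rho (four_block_mat (mat_inv P2 * R2) (- (mat_inv P2 * S2)) (1\<^sub>m n) (0\<^sub>m n n))) < 1"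
proof -
  let ?H1 = "mat_inv P1 * R1" and ?K1 = "mat_inv P1 * S1"
  let ?H2 = "mat_inv P2 * R2" and ?K2 = "mat_inv P2 * S2"
  let ?T1 = "companion_mat n ?H1 (- ?K1)" and ?T2 = "companion_mat n ?H2 (- ?K2)"
  have weak2: "double_weak_regular_splitting n A P2 R2 S2"
    using double_regular_imp_weak_regular_splitting[OF assms(5)] .
  note carrier1 = double_weak_regular_splitting_carrier[OF assms(4)]
    and carrier2 = double_weak_regular_splitting_carrier[OF weak2]
  have assoc: "mat_inv P2 * S2 * mat_inv P1 * R1 = ?K2 * ?H1"
    "mat_inv P2 * S2 * mat_inv P1 * S1 = ?K2 * ?K1"
    using assoc_mult_mat[OF mult_carrier_mat[OF carrier2(1,3)] carrier1(1,2)]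
      assoc_mult_mat[OF mult_carrier_mat[OF carrier2(1,3)] carrier1(1,3)] by simp_all
  have T2: "rho ?T2 < 1"
    using rho_double_splitting_companion_lt_1[OF assms(1,3) weak2] .
  have "min (rho ?T1) (rho ?T2) = rho ?T2"
    using rho_double_splitting_companion_mono[OF assms(1,4) weak2 assms(8,9)] by simp
  moreover have "rho (companion_mat n (?H2 - ?K2 * ?H1) (?K2 * ?K1)) \<le> rho ?T2"
    using rho_two_stage_companion_le_rho[OF assms(1,4,5) T2] .
  ultimately show ?thesis
    unfolding assoc using T2 by simp
qed

end
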